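(* Let $G$ be a looped simple graph and $\nu$ a positive integer. Then $G$ has a transverse matroid of nullity $\nu$ if and only if some looped simple graph locally equivalent to $G$ has a stable set of size $\nu$.
   Context: A looped simple graph is a finite graph in which each vertex carries at most one loop and no two distinct vertices are joined by more than one edge. "Adjacent"/"neighbors" refer only to distinct vertices joined by a non-loop edge; a stable set is a set of vertices no two of which are adjacent. $A(G)$ is the $V(G)\times V(G)$ matrix over $GF(2)$ with diagonal entry $1$ exactly at looped vertices and off-diagonal entry $1$ exactly for adjacent pairs. $IAS(G)=(I\mid A(G)\mid A(G)+I)$ over $GF(2)$, rows indexed by $V(G)$; for $v\in V(G)$ the $v$-columns of the three blocks are labelled $\phi_G(v),\chi_G(v),\psi_G(v)$. The isotropic matroid $M[IAS(G)]$ is the binary column matroid of $IAS(G)$ on $W(G)=\{\phi_G(v),\chi_G(v),\psi_G(v):v\in V(G)\}$. The vertex triple of $v$ is $\tau_G(v)=\{\phi_G(v),\chi_G(v),\psi_G(v)\}$. A transversal is a subset of $W(G)$ meeting each vertex triple in exactly one element; a transverse matroid of $G$ is the restriction of $M[IAS(G)]$ to a transversal. The nullity of a matroid is the size of its ground set minus its rank. Local equivalence: $G_\ell^v$ is obtained from $G$ by complementing the loop status of $v$; $G_s^v$ by complementing the adjacency status of every pair of distinct neighbors of $v$; $G_{ns}^v$ by doing this and also complementing the loop status of every neighbor of $v$. $H$ is locally equivalent to $G$ if $H$ is obtained from $G$ by a finite sequence of such operations. *)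

theory Defs
  imports Main
begin

record 'v lgraph =
  verts :: "'v set"
  adj   :: "'v \<Rightarrow> 'v \<Rightarrow> bool"
  loops :: "'v set"

definition looped_simple_graph :: "('v, 'm) lgraph_scheme \<Rightarrow> bool" where
  "looped_simple_graph G \<longleftrightarrow>
     finite (verts G) \<and> loops G \<subseteq> verts G \<and>
     (\<forall>x y. adj G x y \<longrightarrow> x \<in> verts G \<and> y \<in> verts G \<and> x \<noteq> y) \<and>
     (\<forall>x y. adj G x y \<longleftrightarrow> adj G y x)"

text \<open>Adjacency matrix over GF(2), entries as booleans (True = 1).\<close>
definition adjmat :: "'v lgraph \<Rightarrow> 'v \<Rightarrow> 'v \<Rightarrow> bool" where
  "adjmat G w v = (if w = v then v \<in> loops G else adj G w v)"

datatype label = Phi | Chi | Psi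

text \<open>Element (l, v) of W(G) stands for phi_G(v), chi_G(v), psi_G(v).\<close>
definition W :: "'v lgraph \<Rightarrow> (label \<times> 'v) set" where
  "W G = UNIV \<times> verts G"

text \<open>Entry in row w of the column of IAS(G) labelled x.\<close>
fun IAS :: "'v lgraph \<Rightarrow> label \<times> 'v \<Rightarrow> 'v \<Rightarrow> bool" where
  "IAS G (Phi, v) w = (w = v)"
| "IAS G (Chi, v) w = adjmat G w v"
| "IAS G (Psi, v) w = (adjmat G w v \<noteq> (w = v))"

text \<open>Independence in the binary column matroid: no nonempty subset of the columns
sums to zero over GF(2), i.e. for each nonempty subset some row has odd count of 1s.\<close>
definition indep :: "'v lgraph \<Rightarrow> (label \<times> 'v) set \<Rightarrow> bool" where
  "indep G S \<longleftrightarrow> S \<subseteq> W G \<and>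
     (\<forall>S'\<subseteq>S. S' \<noteq> {} \<longrightarrow> (\<exists>w\<in>verts G. odd (card {x\<in>S'. IAS G x w})))"

definition mrank :: "'v lgraph \<Rightarrow> (label \<times> 'v) set \<Rightarrow> nat" where
  "mrank G T = Max {card I | I. I \<subseteq> T \<and> indep G I}"

definition nullity :: "'v lgraph \<Rightarrow> (label \<times> 'v) set \<Rightarrow> nat" where
  "nullity G T = card T - mrank G T"

definition vtriple :: "'v lgraph \<Rightarrow> 'v \<Rightarrow> (label \<times> 'v) set" where
  "vtriple G v = UNIV \<times> {v}"

definition transversal :: "'v lgraph \<Rightarrow> (label \<times> 'v) set \<Rightarrow> bool" where
  "transversal G T \<longleftrightarrow> T \<subseteq> W G \<and> (\<forall>v\<in>verts G. card (T \<inter> vtriple G v) = 1)"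

definition has_transverse_nullity :: "'v lgraph \<Rightarrow> nat \<Rightarrow> bool" where
  "has_transverse_nullity G \<nu> \<longleftrightarrow> (\<exists>T. transversal G T \<and> nullity G T = \<nu>)"

definition loop_comp :: "'v \<Rightarrow> 'v lgraph \<Rightarrow> 'v lgraph" where
  "loop_comp v G = G\<lparr>loops := (if v \<in> loops G then loops G - {v} else insert v (loops G))\<rparr>"

definition simple_lc :: "'v \<Rightarrow> 'v lgraph \<Rightarrow> 'v lgraph" where
  "simple_lc v G = G\<lparr>adj := (\<lambda>x y. if x \<noteq> y \<and> adj G v x \<and> adj G v y
                                   then \<not> adj G x y else adj G x y)\<rparr>"

definition nonsimple_lc :: "'v \<Rightarrow> 'v lgraph \<Rightarrow> 'v lgraph" where
  "nonsimple_lc v G = (simple_lc v G)\<lparr>loops :=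
      {x \<in> verts G. (x \<in> loops G) \<noteq> adj G v x}\<rparr>"

inductive locally_equivalent :: "'v lgraph \<Rightarrow> 'v lgraph \<Rightarrow> bool" where
  refl: "locally_equivalent G G"
| loop: "locally_equivalent G H \<Longrightarrow> v \<in> verts H \<Longrightarrow> locally_equivalent G (loop_comp v H)"
| simple: "locally_equivalent G H \<Longrightarrow> v \<in> verts H \<Longrightarrow> locally_equivalent G (simple_lc v H)"
| nonsimple: "locally_equivalent G H \<Longrightarrow> v \<in> verts H \<Longrightarrow> locally_equivalent G (nonsimple_lc v H)"

definition stable_set :: "'v lgraph \<Rightarrow> 'v set \<Rightarrow> bool" where
  "stable_set G S \<longleftrightarrow> S \<subseteq> verts G \<and> (\<forall>x\<in>S. \<forall>y\<in>S. \<not> adj G x y)"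

end

theory Submission
  imports Defs
begin

text \<open>Loop complementation at \<open>v\<close> only exchanges the columns \<open>\<chi>(v)\<close> and \<open>\<psi>(v)\<close> of
\<open>IAS(G)\<close>, and non-simple local complementation at \<open>v\<close> acts on \<open>IAS(G)\<close> as the row
operation ``add row \<open>v\<close> to the rows of the neighbours of \<open>v\<close>'' followed by a permutation
of the vertex triple of \<open>v\<close>. So locally equivalent graphs have isomorphic isotropic matroids,
the isomorphism mapping transversals to transversals, and hence the same transverse nullities.

A stable set \<open>S\<close> yields the transversal choosing \<open>\<phi>\<close> outside \<open>S\<close> and, on \<open>S\<close>, the column
with diagonal entry 0: its columns on \<open>S\<close> vanish in the rows of \<open>S\<close>, while the \<open>\<phi>\<close>-columns
are independent, so its nullity is \<open>|S|\<close>. Conversely, the nullity of a transversal is at most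
its number of non-\<open>\<phi>\<close> elements, and pivoting reduces that number: if the chosen column of a
non-\<open>\<phi>\<close> vertex has diagonal entry 1, local complementation there turns it into \<open>\<phi>\<close>; if no
such vertex exists but two non-\<open>\<phi>\<close> vertices are adjacent, local complementation at one of
them toggles the loop of the other and so creates one; otherwise the non-\<open>\<phi>\<close> vertices
form a stable set.\<close>

section \<open>Column sums over GF(2)\<close>

definition column_sum :: "'v lgraph \<Rightarrow> (label \<times> 'v) set \<Rightarrow> 'v \<Rightarrow> bool" where
  "column_sum G S w \<longleftrightarrow> odd (card {x\<in>S. IAS G x w})"

lemma indep_iff_column_sum:
  "indep G S \<longleftrightarrow> S \<subseteq> W G \<and> (\<forall>S'\<subseteq>S. S' \<noteq> {} \<longrightarrow> (\<exists>w\<in>verts G. column_sum G S' w))"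
  unfolding indep_def column_sum_def ..

lemma odd_card_xor:
  assumes "finite S"
  shows "odd (card {x\<in>S. P x \<noteq> Q x}) \<longleftrightarrow> (odd (card {x\<in>S. P x}) \<noteq> odd (card {x\<in>S. Q x}))"
  using assms
proof (induction rule: finite_induct)
  case (insert a S)
  have split: "{x\<in>insert a S. R x} = (if R a then insert a {x\<in>S. R x} else {x\<in>S. R x})" for R
    by auto
  show ?case
    unfolding split using insert by auto
qed simp

lemma column_sum_symdiff:
  assumes "finite A" "finite B"
  shows "column_sum G ((A - B) \<union> (B - A)) w \<longleftrightarrow> (column_sum G A w \<noteq> column_sum G B w)"
proof -
  have "{x\<in>(A - B) \<union> (B - A). IAS G x w} = {x\<in>A \<union> B. (x \<in> A \<and> IAS G x w) \<noteq> (x \<in> B \<and> IAS G x w)}"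
       "{x\<in>A. IAS G x w} = {x\<in>A \<union> B. x \<in> A \<and> IAS G x w}"
       "{x\<in>B. IAS G x w} = {x\<in>A \<union> B. x \<in> B \<and> IAS G x w}"
    by auto
  then show ?thesis
    unfolding column_sum_def using odd_card_xor[of "A \<union> B"] assms by (simp only: finite_Un)
qed

lemma column_sum_image:
  assumes "inj_on \<sigma> S" "finite S"
    and "\<And>x. x \<in> S \<Longrightarrow> IAS H' (\<sigma> x) w \<longleftrightarrow> (IAS H x w \<noteq> (N \<and> IAS H x v))"
  shows "column_sum H' (\<sigma> ` S) w \<longleftrightarrow> (column_sum H S w \<noteq> (N \<and> column_sum H S v))"
proof -
  have "{y\<in>\<sigma> ` S. IAS H' y w} = \<sigma> ` {x\<in>S. IAS H x w \<noteq> (N \<and> IAS H x v)}"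
    using assms(3) by auto
  then have "card {y\<in>\<sigma> ` S. IAS H' y w} = card {x\<in>S. IAS H x w \<noteq> (N \<and> IAS H x v)}"
    using assms(1) by (simp add: card_image inj_on_subset)
  then show ?thesis
    unfolding column_sum_def using odd_card_xor[OF assms(2)] by (cases N) simp_all
qed

lemma ex_row_op_iff:
  assumes "v \<in> V" "\<not> N v" "\<And>w. w \<in> V \<Longrightarrow> c' w \<longleftrightarrow> (c w \<noteq> (N w \<and> c v))"
  shows "(\<exists>w\<in>V. c' w) \<longleftrightarrow> (\<exists>w\<in>V. c w)"
  using assms by (cases "c v") auto

lemma UNIV_label: "UNIV = {Phi, Chi, Psi}"
  by (auto intro: label.exhaust)

lemma finite_W: "finite (verts H) \<Longrightarrow> finite (W H)"
  unfolding W_def UNIV_label by simp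

section \<open>Transversals\<close>

definition transversal_of :: "('v \<Rightarrow> label) \<Rightarrow> 'v set \<Rightarrow> (label \<times> 'v) set" where
  "transversal_of t V = (\<lambda>v. (t v, v)) ` V"

lemma card_transversal_of: "card (transversal_of t V) = card V"
  unfolding transversal_of_def by (rule card_image) (auto intro: inj_onI)

lemma transversal_of_subset_W: "transversal_of t (verts G) \<subseteq> W G"
  unfolding transversal_of_def W_def by auto

lemma transversal_iff_transversal_of: "transversal G T \<longleftrightarrow> (\<exists>t. T = transversal_of t (verts G))"
proof
  assume T: "transversal G T"
  define t where "t v = (THE l. (l, v) \<in> T)" for v
  have "(l, v) \<in> T \<longleftrightarrow> l = t v" if v: "v \<in> verts G" for l v
  proof -
    obtain x where x: "T \<inter> vtriple G v = {x}"
      using T v unfolding transversal_def by (metis card_1_singletonE)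
    then obtain l0 where "x = (l0, v)"
      unfolding vtriple_def by auto
    with x have "(l', v) \<in> T \<longleftrightarrow> l' = l0" for l'
      unfolding vtriple_def by blast
    then show ?thesis
      unfolding t_def by simp
  qed
  moreover have "T \<subseteq> UNIV \<times> verts G"
    using T unfolding transversal_def W_def by blast
  ultimately have "T = transversal_of t (verts G)"
    unfolding transversal_of_def by auto
  then show "\<exists>t. T = transversal_of t (verts G)" by blast
next
  assume "\<exists>t. T = transversal_of t (verts G)"
  then obtain t where T: "T = transversal_of t (verts G)" ..
  have "T \<inter> vtriple G v = {(t v, v)}" if "v \<in> verts G" for v
    using that unfolding T transversal_of_def vtriple_def by auto
  then show "transversal G T"
    unfolding transversal_def using transversal_of_subset_W T by simp
qed

lemma has_transverse_nullity_iff: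
  "has_transverse_nullity G \<nu> \<longleftrightarrow> (\<exists>t. nullity G (transversal_of t (verts G)) = \<nu>)"
  unfolding has_transverse_nullity_def transversal_iff_transversal_of by blast

section \<open>Relabelling the vertex triples\<close>

definition relabel :: "('v \<Rightarrow> label \<Rightarrow> label) \<Rightarrow> label \<times> 'v \<Rightarrow> label \<times> 'v" where
  "relabel p = (\<lambda>(l, y). (p y l, y))"

lemma relabel_relabel:
  assumes "\<And>y l. p y (p y l) = l"
  shows "relabel p (relabel p x) = x"
  using assms by (cases x) (simp add: relabel_def)

lemma inj_relabel:
  assumes "\<And>y l. p y (p y l) = l"
  shows "inj (relabel p)"
  by (metis assms injI relabel_relabel)

lemma relabel_in_W_iff: "relabel p x \<in> W H \<longleftrightarrow> x \<in> W H"
  by (cases x) (simp add: relabel_def W_def)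

lemma relabel_transversal_of:
  "relabel p ` transversal_of t V = transversal_of (\<lambda>y. p y (t y)) V"
  unfolding transversal_of_def relabel_def image_image by simp

text \<open>Under \<open>relabel_iso H H' p\<close>, \<open>relabel p\<close> is an isomorphism of the isotropic matroids: it maps
the sets of columns with vanishing sum onto each other, and with them the dependent sets.\<close>

definition relabel_iso :: "'v lgraph \<Rightarrow> 'v lgraph \<Rightarrow> ('v \<Rightarrow> label \<Rightarrow> label) \<Rightarrow> bool" where
  "relabel_iso H H' p \<longleftrightarrow> (\<forall>y l. p y (p y l) = l) \<and> verts H' = verts H \<and>
     (\<forall>S\<subseteq>W H. (\<exists>w\<in>verts H. column_sum H' (relabel p ` S) w) \<longleftrightarrow> (\<exists>w\<in>verts H. column_sum H S w))"

lemma indep_relabel: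
  assumes iso: "relabel_iso H H' p" and I: "I \<subseteq> W H"
  shows "indep H' (relabel p ` I) \<longleftrightarrow> indep H I"
proof -
  have verts: "verts H' = verts H"
    and sums: "\<And>S. S \<subseteq> W H \<Longrightarrow>
      (\<exists>w\<in>verts H. column_sum H' (relabel p ` S) w) \<longleftrightarrow> (\<exists>w\<in>verts H. column_sum H S w)"
    using iso unfolding relabel_iso_def by blast+
  have "relabel p ` I \<subseteq> W H'"
    using I verts relabel_in_W_iff unfolding W_def by blast
  moreover have "(\<forall>S'\<subseteq>relabel p ` I. S' \<noteq> {} \<longrightarrow> (\<exists>w\<in>verts H. column_sum H' S' w)) \<longleftrightarrow>
      (\<forall>S'\<subseteq>I. S' \<noteq> {} \<longrightarrow> (\<exists>w\<in>verts H. column_sum H' (relabel p ` S') w))"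
    unfolding subset_image_iff by blast
  moreover have "(\<exists>w\<in>verts H. column_sum H' (relabel p ` S') w) \<longleftrightarrow> (\<exists>w\<in>verts H. column_sum H S' w)"
    if "S' \<subseteq> I" for S'
    using sums that I by blast
  ultimately show ?thesis
    unfolding indep_iff_column_sum verts using I by simp
qed

lemma nullity_relabel:
  assumes iso: "relabel_iso H H' p" and T: "T \<subseteq> W H"
  shows "nullity H' (relabel p ` T) = nullity H T"
proof -
  have card_eq: "card (relabel p ` I) = card I" for I
    using iso inj_relabel[of p] unfolding relabel_iso_def by (simp add: card_image inj_on_subset)
  have "{card J | J. J \<subseteq> relabel p ` T \<and> indep H' J} =
        {card (relabel p ` I) | I. I \<subseteq> T \<and> indep H' (relabel p ` I)}"
    unfolding subset_image_iff by blast
  also have "\<dots> = {card I | I. I \<subseteq> T \<and> indep H I}"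
  proof (intro Collect_cong iffI; elim exE conjE)
    fix n I assume "n = card (relabel p ` I)" "I \<subseteq> T" "indep H' (relabel p ` I)"
    then show "\<exists>I. n = card I \<and> I \<subseteq> T \<and> indep H I"
      using indep_relabel[OF iso] T card_eq by (metis subset_trans)
  next
    fix n I assume "n = card I" "I \<subseteq> T" "indep H I"
    then show "\<exists>I. n = card (relabel p ` I) \<and> I \<subseteq> T \<and> indep H' (relabel p ` I)"
      using indep_relabel[OF iso] T card_eq by (metis subset_trans)
  qed
  finally show ?thesis
    unfolding nullity_def mrank_def card_eq by simp
qed

lemma has_transverse_nullity_relabel:
  assumes iso: "relabel_iso H H' p"
  shows "has_transverse_nullity H' \<nu> \<longleftrightarrow> has_transverse_nullity H \<nu>"
proof -
  have verts: "verts H' = verts H" and p: "p y (p y l) = l" for y l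
    using iso unfolding relabel_iso_def by blast+
  have "nullity H' (transversal_of (\<lambda>y. p y (t y)) (verts H)) = nullity H (transversal_of t (verts H))"
    for t
    using nullity_relabel[OF iso transversal_of_subset_W] relabel_transversal_of by metis
  moreover have "(\<lambda>y. p y (p y (t y))) = t" for t
    using p by simp
  ultimately show ?thesis
    unfolding has_transverse_nullity_iff verts by metis
qed

lemma relabel_iso_row_op:
  assumes p: "\<And>y l. p y (p y l) = l" and fin: "finite (verts H)" and verts: "verts H' = verts H"
    and v: "v \<in> verts H" "\<not> N v"
    and row_op: "\<And>x w. x \<in> W H \<Longrightarrow> w \<in> verts H \<Longrightarrow>
      IAS H' (relabel p x) w \<longleftrightarrow> (IAS H x w \<noteq> (N w \<and> IAS H x v))"
  shows "relabel_iso H H' p"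
  unfolding relabel_iso_def
proof (intro conjI allI impI)
  fix S assume S: "S \<subseteq> W H"
  show "(\<exists>w\<in>verts H. column_sum H' (relabel p ` S) w) \<longleftrightarrow> (\<exists>w\<in>verts H. column_sum H S w)"
  proof (rule ex_row_op_iff[where N = N, OF v])
    fix w assume "w \<in> verts H"
    then show "column_sum H' (relabel p ` S) w \<longleftrightarrow> (column_sum H S w \<noteq> (N w \<and> column_sum H S v))"
      using S row_op finite_subset[OF S finite_W[OF fin]] inj_relabel[of p] p
      by (intro column_sum_image) (auto intro: inj_on_subset)
  qed
next
  show "p y (p y l) = l" for y l
    by (rule p)
qed (rule verts)

section \<open>Local complementation\<close>

lemma loop_comp_simps [simp]:
  "verts (loop_comp v H) = verts H"
  "adj (loop_comp v H) = adj H"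
  "loops (loop_comp v H) = (if v \<in> loops H then loops H - {v} else insert v (loops H))"
  unfolding loop_comp_def by simp_all

lemma simple_lc_simps [simp]:
  "verts (simple_lc v H) = verts H"
  "adj (simple_lc v H) = (\<lambda>x y. if x \<noteq> y \<and> adj H v x \<and> adj H v y then \<not> adj H x y else adj H x y)"
  "loops (simple_lc v H) = loops H"
  unfolding simple_lc_def by simp_all

lemma nonsimple_lc_simps [simp]:
  "verts (nonsimple_lc v H) = verts H"
  "adj (nonsimple_lc v H) = adj (simple_lc v H)"
  "loops (nonsimple_lc v H) = {x \<in> verts H. (x \<in> loops H) \<noteq> adj H v x}"
  unfolding nonsimple_lc_def by simp_all

lemma looped_simple_graph_loop_comp:
  assumes "looped_simple_graph H" "v \<in> verts H"
  shows "looped_simple_graph (loop_comp v H)"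
proof -
  have "loops (loop_comp v H) \<subseteq> verts H"
    using assms unfolding looped_simple_graph_def by auto
  then show ?thesis
    using assms(1) unfolding looped_simple_graph_def loop_comp_simps(1,2) by blast
qed

lemma looped_simple_graph_simple_lc:
  assumes "looped_simple_graph H"
  shows "looped_simple_graph (simple_lc v H)"
proof -
  have sym: "adj H x y \<longleftrightarrow> adj H y x"
    and edge: "adj H x y \<Longrightarrow> x \<in> verts H \<and> y \<in> verts H \<and> x \<noteq> y" for x y
    using assms unfolding looped_simple_graph_def by blast+
  have "adj (simple_lc v H) x y \<longleftrightarrow> adj (simple_lc v H) y x" for x y
    using sym[of x y] by (auto simp del: simple_lc_simps simp: simple_lc_def)
  moreover have "x \<in> verts H \<and> y \<in> verts H \<and> x \<noteq> y" if "adj (simple_lc v H) x y" for x y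
    using that edge[of x y] edge[of v x] edge[of v y]
    by (cases "x \<noteq> y \<and> adj H v x \<and> adj H v y") auto
  ultimately show ?thesis
    using assms unfolding looped_simple_graph_def simple_lc_simps(1,3) by blast
qed

lemma looped_simple_graph_nonsimple_lc:
  assumes "looped_simple_graph H"
  shows "looped_simple_graph (nonsimple_lc v H)"
proof -
  have "loops (nonsimple_lc v H) \<subseteq> verts (simple_lc v H)"
    by auto
  then show ?thesis
    using looped_simple_graph_simple_lc[OF assms, of v]
    unfolding looped_simple_graph_def nonsimple_lc_simps(1,2) simple_lc_simps(1) by blast
qed

fun swap_chi_psi :: "label \<Rightarrow> label" where
  "swap_chi_psi Phi = Phi"
| "swap_chi_psi Chi = Psi"
| "swap_chi_psi Psi = Chi"

lemma has_transverse_nullity_change_loops: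
  assumes fin: "finite (verts H)" and verts: "verts H' = verts H" and adj: "adj H' = adj H"
  shows "has_transverse_nullity H' \<nu> \<longleftrightarrow> has_transverse_nullity H \<nu>"
proof -
  define p where "p y = (if (y \<in> loops H) \<noteq> (y \<in> loops H') then swap_chi_psi else id)" for y
  have p: "p y (p y l) = l" for y l
    unfolding p_def by (cases l) auto
  have IAS_eq: "IAS H' (relabel p x) w \<longleftrightarrow> IAS H x w" for x w
  proof -
    obtain l y where "x = (l, y)"
      by fastforce
    then show ?thesis
      by (cases l) (auto simp: relabel_def p_def adjmat_def adj)
  qed
  have "column_sum H' (relabel p ` S) w \<longleftrightarrow> column_sum H S w" if "S \<subseteq> W H" for S w
    using column_sum_image[where \<sigma> = "relabel p" and N = False] IAS_eq that
      finite_subset[OF that finite_W[OF fin]] inj_relabel[where p = p] p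
    by (simp add: inj_on_subset)
  then have "relabel_iso H H' p"
    unfolding relabel_iso_def using p verts by blast
  then show ?thesis
    by (rule has_transverse_nullity_relabel)
qed

text \<open>At a looped pivot \<open>\<chi>\<close> is the column with diagonal entry 1, at an unlooped one it is
\<open>\<psi>\<close>; that column is exchanged with \<open>\<phi>\<close>.\<close>

fun pivot_label :: "bool \<Rightarrow> label \<Rightarrow> label" where
  "pivot_label True Phi = Chi"
| "pivot_label True Chi = Phi"
| "pivot_label True Psi = Psi"
| "pivot_label False Phi = Psi"
| "pivot_label False Psi = Phi"
| "pivot_label False Chi = Chi"

lemma pivot_label_pivot_label [simp]: "pivot_label b (pivot_label b l) = l"
  by (cases b; cases l) simp_all

definition pivot_relabel :: "'v lgraph \<Rightarrow> 'v \<Rightarrow> 'v \<Rightarrow> label \<Rightarrow> label" where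
  "pivot_relabel H v y = (if y = v then pivot_label (v \<in> loops H) else id)"

lemma pivot_relabel_pivot_relabel: "pivot_relabel H v y (pivot_relabel H v y l) = l"
  unfolding pivot_relabel_def by simp

lemma IAS_nonsimple_lc:
  assumes G: "looped_simple_graph H" and x: "x \<in> W H" and w: "w \<in> verts H"
  shows "IAS (nonsimple_lc v H) (relabel (pivot_relabel H v) x) w \<longleftrightarrow>
    (IAS H x w \<noteq> (adj H v w \<and> IAS H x v))"
proof -
  obtain l y where xy: "x = (l, y)" and y: "y \<in> verts H"
    using x unfolding W_def by auto
  have irrefl: "\<not> adj H z z" and sym: "adj H z z' \<longleftrightarrow> adj H z' z" for z z'
    using G unfolding looped_simple_graph_def by blast+
  show ?thesis
    unfolding xy relabel_def pivot_relabel_def using irrefl sym w y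
    by (cases "y = v"; cases l; cases "v \<in> loops H") (auto simp: adjmat_def)
qed

lemma relabel_iso_nonsimple_lc:
  assumes G: "looped_simple_graph H" and v: "v \<in> verts H"
  shows "relabel_iso H (nonsimple_lc v H) (pivot_relabel H v)"
proof (rule relabel_iso_row_op[where N = "adj H v", OF pivot_relabel_pivot_relabel _ _ v])
  show "finite (verts H)" "\<not> adj H v v"
    using G unfolding looped_simple_graph_def by blast+
  show "verts (nonsimple_lc v H) = verts H"
    by (rule nonsimple_lc_simps(1))
qed (rule IAS_nonsimple_lc[OF G])

lemma has_transverse_nullity_nonsimple_lc:
  "looped_simple_graph H \<Longrightarrow> v \<in> verts H \<Longrightarrow>
    has_transverse_nullity (nonsimple_lc v H) \<nu> \<longleftrightarrow> has_transverse_nullity H \<nu>"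
  by (rule has_transverse_nullity_relabel[OF relabel_iso_nonsimple_lc])

lemma has_transverse_nullity_simple_lc:
  assumes G: "looped_simple_graph H" and v: "v \<in> verts H"
  shows "has_transverse_nullity (simple_lc v H) \<nu> \<longleftrightarrow> has_transverse_nullity H \<nu>"
proof -
  have "finite (verts H)"
    using G unfolding looped_simple_graph_def by blast
  then have "has_transverse_nullity (simple_lc v H) \<nu> \<longleftrightarrow> has_transverse_nullity (nonsimple_lc v H) \<nu>"
    by (intro has_transverse_nullity_change_loops) simp_all
  then show ?thesis
    using has_transverse_nullity_nonsimple_lc[OF G v] by simp
qed

lemma has_transverse_nullity_loop_comp:
  assumes "looped_simple_graph H"
  shows "has_transverse_nullity (loop_comp v H) \<nu> \<longleftrightarrow> has_transverse_nullity H \<nu>"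
  using assms unfolding looped_simple_graph_def
  by (intro has_transverse_nullity_change_loops) simp_all

lemma locally_equivalent_invariants:
  assumes "locally_equivalent G H" "looped_simple_graph G"
  shows "looped_simple_graph H \<and> (\<forall>\<nu>. has_transverse_nullity H \<nu> \<longleftrightarrow> has_transverse_nullity G \<nu>)"
  using assms
proof (induction rule: locally_equivalent.induct)
  case (loop G H v)
  then have "looped_simple_graph H" by blast
  with loop show ?case
    by (simp add: looped_simple_graph_loop_comp has_transverse_nullity_loop_comp)
next
  case (simple G H v)
  then have "looped_simple_graph H" by blast
  with simple show ?case
    by (simp add: looped_simple_graph_simple_lc has_transverse_nullity_simple_lc)
next
  case (nonsimple G H v)
  then have "looped_simple_graph H" by blast
  with nonsimple show ?case
    by (simp add: looped_simple_graph_nonsimple_lc has_transverse_nullity_nonsimple_lc)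
qed simp

lemma locally_equivalent_trans:
  "locally_equivalent H K \<Longrightarrow> locally_equivalent G H \<Longrightarrow> locally_equivalent G K"
  by (induction rule: locally_equivalent.induct) (auto intro: locally_equivalent.intros)

section \<open>Rank bounds\<close>

lemma finite_indep_cards:
  assumes "finite (verts H)"
  shows "finite {card I | I. I \<subseteq> T \<and> indep H I}"
proof (rule finite_subset)
  show "{card I | I. I \<subseteq> T \<and> indep H I} \<subseteq> card ` Pow (W H)"
    unfolding indep_def by blast
qed (use finite_W[OF assms] in simp)

lemma card_indep_le_mrank:
  assumes "finite (verts H)" "I \<subseteq> T" "indep H I"
  shows "card I \<le> mrank H T"
  unfolding mrank_def using assms finite_indep_cards[OF assms(1)] by (auto intro: Max_ge)

lemma mrank_le:
  assumes "finite (verts H)" "\<And>I. I \<subseteq> T \<Longrightarrow> indep H I \<Longrightarrow> card I \<le> b"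
  shows "mrank H T \<le> b"
proof -
  have "indep H {}"
    unfolding indep_def by simp
  then show ?thesis
    unfolding mrank_def using assms finite_indep_cards[OF assms(1)] by (subst Max_le_iff) auto
qed

lemma indep_Phi_columns:
  assumes "V \<subseteq> verts H"
  shows "indep H (Pair Phi ` V)"
  unfolding indep_iff_column_sum
proof (intro conjI allI impI)
  show "Pair Phi ` V \<subseteq> W H"
    using assms unfolding W_def by auto
  fix S assume S: "S \<subseteq> Pair Phi ` V" "S \<noteq> {}"
  then obtain u where u: "(Phi, u) \<in> S" "u \<in> verts H"
    using assms by auto
  have "{x\<in>S. IAS H x u} = {(Phi, u)}"
    using S(1) u(1) by auto
  then have "column_sum H S u"
    unfolding column_sum_def by simp
  with u(2) show "\<exists>w\<in>verts H. column_sum H S w" ..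
qed

lemma card_Phi_le_mrank:
  assumes "finite (verts H)"
  shows "card {v\<in>verts H. t v = Phi} \<le> mrank H (transversal_of t (verts H))"
proof -
  have "Pair Phi ` {v\<in>verts H. t v = Phi} = transversal_of t {v\<in>verts H. t v = Phi}"
    unfolding transversal_of_def by auto
  moreover have "\<dots> \<subseteq> transversal_of t (verts H)"
    unfolding transversal_of_def by (rule image_mono) auto
  ultimately show ?thesis
    using card_indep_le_mrank[OF assms _ indep_Phi_columns] card_transversal_of
    by (metis (no_types, lifting) mem_Collect_eq subsetI)
qed

lemma nullity_le_card_non_Phi:
  assumes "finite (verts H)"
  shows "nullity H (transversal_of t (verts H)) \<le> card {v\<in>verts H. t v \<noteq> Phi}"
proof -
  have "card (verts H) = card {v\<in>verts H. t v = Phi} + card {v\<in>verts H. t v \<noteq> Phi}"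
    using assms by (subst card_Un_disjoint[symmetric]) (auto intro: arg_cong[where f = card])
  then show ?thesis
    unfolding nullity_def card_transversal_of using card_Phi_le_mrank[OF assms, of t] by linarith
qed

lemma card_indep_le_support:
  assumes ind: "indep H I" and R: "finite R"
    and support: "\<And>x w. x \<in> I \<Longrightarrow> w \<in> verts H \<Longrightarrow> IAS H x w \<Longrightarrow> w \<in> R"
  shows "card I \<le> card R"
proof (cases "finite I")
  case finI: True
  define sums where "sums A = {w\<in>verts H. column_sum H A w}" for A
  have sums_R: "sums A \<subseteq> R" if "A \<subseteq> I" for A
  proof
    fix w assume "w \<in> sums A"
    then have "w \<in> verts H" "{x\<in>A. IAS H x w} \<noteq> {}"
      unfolding sums_def column_sum_def by (auto simp del: Collect_empty_eq)
    then show "w \<in> R"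
      using that support by blast
  qed
  have "inj_on sums (Pow I)"
  proof (rule inj_onI, rule ccontr)
    fix A B assume AB: "A \<in> Pow I" "B \<in> Pow I" "sums A = sums B" "A \<noteq> B"
    have "(A - B) \<union> (B - A) \<subseteq> I" "(A - B) \<union> (B - A) \<noteq> {}"
      using AB(1,2,4) by blast+
    then obtain w where w: "w \<in> verts H" "column_sum H ((A - B) \<union> (B - A)) w"
      using ind unfolding indep_iff_column_sum by blast
    have "finite A" "finite B"
      using AB(1,2) finI by (auto intro: finite_subset)
    then have "column_sum H A w \<noteq> column_sum H B w"
      using w(2) by (simp add: column_sum_symdiff)
    moreover have "w \<in> sums A \<longleftrightarrow> w \<in> sums B"
      using AB(3) by (rule arg_cong)
    ultimately show False
      using w(1) unfolding sums_def by simp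
  qed
  moreover have "sums ` Pow I \<subseteq> Pow R"
    using sums_R by blast
  ultimately have "card (Pow I) \<le> card (Pow R)"
    using R by (intro card_inj_on_le) simp_all
  then have "(2::nat) ^ card I \<le> 2 ^ card R"
    using finI R by (simp only: card_Pow)
  then show ?thesis
    by simp
qed simp

lemma nullity_stable_transversal:
  assumes G: "looped_simple_graph H" and S: "stable_set H S"
  shows "nullity H (transversal_of (\<lambda>v. if v \<notin> S then Phi else if v \<in> loops H then Psi else Chi)
    (verts H)) = card S"
    (is "nullity H (transversal_of ?t (verts H)) = _")
proof -
  let ?T = "transversal_of ?t (verts H)"
  have fin: "finite (verts H)" and SV: "S \<subseteq> verts H"
    using G S unfolding looped_simple_graph_def stable_set_def by blast+
  have Phi_part: "{v\<in>verts H. ?t v = Phi} = verts H - S"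
    by auto
  have "w \<notin> S" if "x \<in> ?T" "w \<in> verts H" "IAS H x w" for x w
  proof
    assume w: "w \<in> S"
    obtain v where x: "x = (?t v, v)"
      using \<open>x \<in> ?T\<close> unfolding transversal_of_def by blast
    have "\<not> adj H w v" if "v \<in> S"
      using S w that unfolding stable_set_def by blast
    then show False
      using \<open>IAS H x w\<close> w unfolding x
      by (cases "v \<in> S"; cases "v \<in> loops H") (auto simp: adjmat_def split: if_splits)
  qed
  then have "mrank H ?T \<le> card (verts H - S)"
    using fin by (intro mrank_le card_indep_le_support) auto
  moreover have "card (verts H - S) \<le> mrank H ?T"
    using card_Phi_le_mrank[OF fin, of ?t] unfolding Phi_part .
  moreover have "card (verts H - S) = card (verts H) - card S" "card S \<le> card (verts H)"
    using fin SV by (simp_all add: card_Diff_subset finite_subset card_mono)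
  ultimately show ?thesis
    unfolding nullity_def card_transversal_of by linarith
qed

lemma has_transverse_nullity_card_stable_set:
  "looped_simple_graph H \<Longrightarrow> stable_set H S \<Longrightarrow> has_transverse_nullity H (card S)"
  unfolding has_transverse_nullity_iff using nullity_stable_transversal by blast

section \<open>Pivoting towards a stable set\<close>

lemma nullity_nonsimple_lc_transversal_of:
  assumes G: "looped_simple_graph H" and v: "v \<in> verts H" and tv: "t v \<noteq> Phi"
  shows "nullity (nonsimple_lc v H)
      (transversal_of (t(v := if IAS H (t v, v) v then Phi else t v)) (verts H)) =
    nullity H (transversal_of t (verts H))"
proof -
  have "pivot_label (v \<in> loops H) (t v) = (if IAS H (t v, v) v then Phi else t v)"
    using tv by (cases "t v"; cases "v \<in> loops H") (simp_all add: adjmat_def)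
  then have relabelled: "(\<lambda>y. pivot_relabel H v y (t y)) = t(v := if IAS H (t v, v) v then Phi else t v)"
    unfolding pivot_relabel_def by auto
  have "nullity (nonsimple_lc v H) (relabel (pivot_relabel H v) ` transversal_of t (verts H)) =
      nullity H (transversal_of t (verts H))"
    by (rule nullity_relabel[OF relabel_iso_nonsimple_lc[OF G v] transversal_of_subset_W])
  then show ?thesis
    unfolding relabel_transversal_of relabelled .
qed

lemma IAS_nonsimple_lc_neighbour_diagonal:
  assumes "adj H v u" "u \<noteq> v" "u \<in> verts H" "l \<noteq> Phi"
  shows "IAS (nonsimple_lc v H) (l, u) u \<longleftrightarrow> \<not> IAS H (l, u) u"
  using assms by (cases l) (auto simp: adjmat_def)

lemma card_non_Phi_fun_upd_less:
  assumes "finite V" "v \<in> V" "s v \<noteq> Phi"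
  shows "card {y\<in>V. (s(v := Phi)) y \<noteq> Phi} < card {y\<in>V. s y \<noteq> Phi}"
proof -
  have "card ({y\<in>V. s y \<noteq> Phi} - {v}) < card {y\<in>V. s y \<noteq> Phi}"
    using assms by (intro card_Diff1_less) simp_all
  moreover have "{y\<in>V. (s(v := Phi)) y \<noteq> Phi} = {y\<in>V. s y \<noteq> Phi} - {v}"
    by auto
  ultimately show ?thesis
    by simp
qed

definition stable_set_bound :: "'v lgraph \<Rightarrow> nat \<Rightarrow> bool" where
  "stable_set_bound H n \<longleftrightarrow> (\<exists>H' S. locally_equivalent H H' \<and> stable_set H' S \<and> n \<le> card S)"

lemma stable_set_bound_nonsimple_lc:
  assumes "v \<in> verts H" "stable_set_bound (nonsimple_lc v H) n"
  shows "stable_set_bound H n"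
proof -
  obtain H' S where "locally_equivalent (nonsimple_lc v H) H'" "stable_set H' S" "n \<le> card S"
    using assms(2) unfolding stable_set_bound_def by blast
  moreover have "locally_equivalent H (nonsimple_lc v H)"
    using locally_equivalent.nonsimple[OF locally_equivalent.refl assms(1)] .
  ultimately show ?thesis
    unfolding stable_set_bound_def using locally_equivalent_trans by blast
qed

lemma stable_set_bound_nullity:
  fixes H :: "'v lgraph"
  assumes "looped_simple_graph H"
  shows "stable_set_bound H (nullity H (transversal_of t (verts H)))"
  using assms
proof (induction "card {v\<in>verts H. t v \<noteq> Phi}" arbitrary: H t rule: less_induct)
  case less
  have pivot: "stable_set_bound K (nullity K (transversal_of s (verts K)))"
    if K: "looped_simple_graph K" "card {v\<in>verts K. s v \<noteq> Phi} = card {v\<in>verts H. t v \<noteq> Phi}"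
      and v: "v \<in> verts K" "s v \<noteq> Phi" "IAS K (s v, v) v" for K :: "'v lgraph" and s v
  proof -
    have "finite (verts K)"
      using K(1) unfolding looped_simple_graph_def by blast
    then have "card {y\<in>verts (nonsimple_lc v K). (s(v := Phi)) y \<noteq> Phi} < card {y\<in>verts H. t y \<noteq> Phi}"
      using card_non_Phi_fun_upd_less[of "verts K" v s] v(1,2) K(2) by simp
    then have "stable_set_bound (nonsimple_lc v K)
        (nullity (nonsimple_lc v K) (transversal_of (s(v := Phi)) (verts K)))"
      using less.hyps[OF _ looped_simple_graph_nonsimple_lc[OF K(1)]] by simp
    moreover have "nullity (nonsimple_lc v K) (transversal_of (s(v := Phi)) (verts K)) =
        nullity K (transversal_of s (verts K))"
      using nullity_nonsimple_lc_transversal_of[of K v s, OF K(1) v(1,2)] v(3) by simp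
    ultimately show ?thesis
      using stable_set_bound_nonsimple_lc[OF v(1)] by simp
  qed
  consider (diagonal) v where "v \<in> verts H" "t v \<noteq> Phi" "IAS H (t v, v) v"
    | (edge) u w where "u \<in> verts H" "w \<in> verts H" "t u \<noteq> Phi" "t w \<noteq> Phi" "adj H w u"
        "\<not> IAS H (t u, u) u" "\<not> IAS H (t w, w) w"
    | (stable) "stable_set H {v\<in>verts H. t v \<noteq> Phi}"
    unfolding stable_set_def by blast
  then show ?case
  proof cases
    case diagonal
    then show ?thesis
      by (rule pivot[OF less.prems HOL.refl])
  next
    case edge
    let ?K = "nonsimple_lc w H"
    have "u \<noteq> w"
      using edge(5) less.prems unfolding looped_simple_graph_def by blast
    then have "IAS ?K (t u, u) u"
      using IAS_nonsimple_lc_neighbour_diagonal[OF edge(5) _ edge(1,3)] edge(6) by simp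
    then have "stable_set_bound ?K (nullity ?K (transversal_of t (verts ?K)))"
      using pivot[OF looped_simple_graph_nonsimple_lc[OF less.prems]] edge(1,3) by simp
    then show ?thesis
      using nullity_nonsimple_lc_transversal_of[of H w t, OF less.prems edge(2,4)] edge(7)
        stable_set_bound_nonsimple_lc[OF edge(2)] by simp
  next
    case stable
    have "finite (verts H)"
      using less.prems unfolding looped_simple_graph_def by blast
    then have "nullity H (transversal_of t (verts H)) \<le> card {v\<in>verts H. t v \<noteq> Phi}"
      by (rule nullity_le_card_non_Phi)
    with stable show ?thesis
      unfolding stable_set_bound_def using locally_equivalent.refl by blast
  qed
qed

lemma stable_set_subset: "stable_set H S \<Longrightarrow> S' \<subseteq> S \<Longrightarrow> stable_set H S'"
  unfolding stable_set_def by blast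

theorem corollary1p3:
  fixes G :: "'v lgraph" and \<nu> :: nat
  assumes "looped_simple_graph G" and "\<nu> > 0"
  shows "has_transverse_nullity G \<nu> \<longleftrightarrow>
         (\<exists>H S. locally_equivalent G H \<and> stable_set H S \<and> card S = \<nu>)"
proof
  assume "has_transverse_nullity G \<nu>"
  then obtain t where "nullity G (transversal_of t (verts G)) = \<nu>"
    unfolding has_transverse_nullity_iff ..
  then obtain H S where H: "locally_equivalent G H" "stable_set H S" "\<nu> \<le> card S"
    using stable_set_bound_nullity[OF assms(1), of t] unfolding stable_set_bound_def by blast
  have "finite S"
    using locally_equivalent_invariants[OF H(1) assms(1)] H(2)
    unfolding looped_simple_graph_def stable_set_def by (blast intro: finite_subset)
  then obtain S' where "S' \<subseteq> S" "card S' = \<nu>"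
    using obtain_subset_with_card_n[OF H(3)] by blast
  then show "\<exists>H S. locally_equivalent G H \<and> stable_set H S \<and> card S = \<nu>"
    using H(1,2) stable_set_subset by blast
next
  assume "\<exists>H S. locally_equivalent G H \<and> stable_set H S \<and> card S = \<nu>"
  then obtain H S where H: "locally_equivalent G H" "stable_set H S" "card S = \<nu>"
    by blast
  then show "has_transverse_nullity G \<nu>"
    using locally_equivalent_invariants[OF H(1) assms(1)] has_transverse_nullity_card_stable_set
    by blast
qed

end
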